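(* Take $N=1$, $\rho=0.35$, $Q=321$, $A=167$, $B=1.9$, $\alpha_1=0.32$, $\alpha_i=0.36$, $\alpha_2=0.8$, $T_c=0$, $D=0.25$, and any fixed $R>0$. Let $V$ be the piecewise vector field on $\mathbb R^3$ (coordinates $(T_0,T_2,\eta)$) defined below. Then for all sufficiently small $\varepsilon>0$, the system $(\dot T_0,\dot T_2,\dot\eta)=V(T_0,T_2,\eta)$ has an asymptotically stable equilibrium whose $\eta$-coordinate lies in the open interval $(0,\rho)$ (a "Jormungand" state: ice line in tropical latitudes, not a snowball state $\eta=0$).
   Context: $p_0(y)=1$, $p_2(y)=\tfrac12(3y^2-1)$. Let $s(y)=s_0+s_2p_2(y)$ with $s_0=1$, $s_2=-0.477$; $q_0=s$, $q_2=s\,p_2$. For $n=0,1$: \[ \overline b_{2n}(\eta)=\alpha_2 s_{2n}-(4n+1)(\alpha_2-\alpha_1)\int_0^\eta q_{2n}(y)\,dy, \] \[ \overline a_{2n}(\eta)=\alpha_2 s_{2n}-(4n+1)\Bigl((\alpha_2-\alpha_i)\int_\eta^\rho q_{2n}(y)\,dy+(\alpha_2-\alpha_1)\int_0^\eta q_{2n}(y)\,dy\Bigr), \] \[ f^{\mp}_0(\eta)=\tfrac1B\bigl(Q(s_0-\overline c_0(\eta))-A\bigr),\qquad f^{\mp}_{2}(\eta)=\frac{Q(s_{2}-\overline c_{2}(\eta))}{B+6D}, \] with $\overline c=\overline a$ for $f^-$ and $\overline c=\overline b$ for $f^+$. The vector fields $V^\pm$ are \[ \dot T_0=-\tfrac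 BR\bigl(T_0-f^\pm_0(\eta)\bigr),\quad \dot T_2=-\tfrac{B+6D}{R}\bigl(T_2-f^\pm_2(\eta)\bigr),\quad \dot\eta=\varepsilon\bigl(T_0+T_2p_2(\eta)-T_c\bigr), \] and $V=V^-$ on $\{\eta<\rho\}$, $V=V^+$ on $\{\eta\ge\rho\}$. (This corresponds to the Jormungand albedo: for $\eta<\rho$, albedo $\alpha_1$ for $y<\eta$, $\alpha_i$ for $\eta<y<\rho$, $\alpha_2$ for $y>\rho$; for $\eta\ge\rho$, albedo $\alpha_1$ for $y<\eta$, $\alpha_2$ for $y>\eta$.) *)

theory Defs
  imports "HOL-Analysis.Analysis"
begin

definition rho :: real where "rho = 0.35"
definition Qc :: real where "Qc = 321"
definition Ac :: real where "Ac = 167"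
definition Bc :: real where "Bc = 1.9"
definition alpha1 :: real where "alpha1 = 0.32"
definition alphai :: real where "alphai = 0.36"
definition alpha2 :: real where "alpha2 = 0.8"
definition Tc :: real where "Tc = 0"
definition Dc :: real where "Dc = 0.25"
definition s0 :: real where "s0 = 1"
definition s2 :: real where "s2 = -0.477"

definition p2 :: "real \<Rightarrow> real" where "p2 y = (3 * y^2 - 1) / 2"
definition s :: "real \<Rightarrow> real" where "s y = s0 + s2 * p2 y"
definition q0 :: "real \<Rightarrow> real" where "q0 y = s y"
definition q2 :: "real \<Rightarrow> real" where "q2 y = s y * p2 y"

definition sint :: "real \<Rightarrow> real \<Rightarrow> (real \<Rightarrow> real) \<Rightarrow> real" where
  "sint a b f = (if a \<le> b then integral {a..b} f else - integral {b..a} f)"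

definition bbar0 :: "real \<Rightarrow> real" where
  "bbar0 \<eta> = alpha2 * s0 - 1 * (alpha2 - alpha1) * sint 0 \<eta> q0"
definition bbar2 :: "real \<Rightarrow> real" where
  "bbar2 \<eta> = alpha2 * s2 - 5 * (alpha2 - alpha1) * sint 0 \<eta> q2"
definition abar0 :: "real \<Rightarrow> real" where
  "abar0 \<eta> = alpha2 * s0 - 1 * ((alpha2 - alphai) * sint \<eta> rho q0 + (alpha2 - alpha1) * sint 0 \<eta> q0)"
definition abar2 :: "real \<Rightarrow> real" where
  "abar2 \<eta> = alpha2 * s2 - 5 * ((alpha2 - alphai) * sint \<eta> rho q2 + (alpha2 - alpha1) * sint 0 \<eta> q2)"

definition fminus0 :: "real \<Rightarrow> real" where "fminus0 \<eta> = (Qc * (s0 - abar0 \<eta>) - Ac) / Bc"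
definition fminus2 :: "real \<Rightarrow> real" where "fminus2 \<eta> = Qc * (s2 - abar2 \<eta>) / (Bc + 6 * Dc)"
definition fplus0 :: "real \<Rightarrow> real" where "fplus0 \<eta> = (Qc * (s0 - bbar0 \<eta>) - Ac) / Bc"
definition fplus2 :: "real \<Rightarrow> real" where "fplus2 \<eta> = Qc * (s2 - bbar2 \<eta>) / (Bc + 6 * Dc)"

definition Vfield :: "(real \<Rightarrow> real) \<Rightarrow> (real \<Rightarrow> real) \<Rightarrow> real \<Rightarrow> real
    \<Rightarrow> real \<times> real \<times> real \<Rightarrow> real \<times> real \<times> real" where
  "Vfield f0 f2 R \<epsilon> z = (case z of (T0, T2, \<eta>) \<Rightarrow>
     (- (Bc / R) * (T0 - f0 \<eta>),
      - ((Bc + 6 * Dc) / R) * (T2 - f2 \<eta>),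
      \<epsilon> * (T0 + T2 * p2 \<eta> - Tc)))"

definition Vminus :: "real \<Rightarrow> real \<Rightarrow> real \<times> real \<times> real \<Rightarrow> real \<times> real \<times> real" where
  "Vminus R \<epsilon> = Vfield fminus0 fminus2 R \<epsilon>"
definition Vplus :: "real \<Rightarrow> real \<Rightarrow> real \<times> real \<times> real \<Rightarrow> real \<times> real \<times> real" where
  "Vplus R \<epsilon> = Vfield fplus0 fplus2 R \<epsilon>"

definition V :: "real \<Rightarrow> real \<Rightarrow> real \<times> real \<times> real \<Rightarrow> real \<times> real \<times> real" where
  "V R \<epsilon> z = (if snd (snd z) < rho then Vminus R \<epsilon> z else Vplus R \<epsilon> z)"

definition is_solution_on :: "('a::real_normed_vector \<Rightarrow> 'a) \<Rightarrow> (real \<Rightarrow> 'a) \<Rightarrow> real set \<Rightarrow> bool" where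
  "is_solution_on F x I \<longleftrightarrow> (\<forall>t\<in>I. (x has_vector_derivative F (x t)) (at t within I))"

definition lyapunov_stable :: "('a::real_normed_vector \<Rightarrow> 'a) \<Rightarrow> 'a \<Rightarrow> bool" where
  "lyapunov_stable F p \<longleftrightarrow>
     (\<forall>e>0. \<exists>d>0. \<forall>x T. 0 \<le> T \<longrightarrow> is_solution_on F x {0..T} \<longrightarrow> dist (x 0) p < d \<longrightarrow>
        (\<forall>t\<in>{0..T}. dist (x t) p < e))"

definition locally_attractive :: "('a::real_normed_vector \<Rightarrow> 'a) \<Rightarrow> 'a \<Rightarrow> bool" where
  "locally_attractive F p \<longleftrightarrow>
     (\<exists>d>0. \<forall>x0. dist x0 p < d \<longrightarrow>
        (\<exists>x. is_solution_on F x {0..} \<and> x 0 = x0) \<and>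
        (\<forall>x. is_solution_on F x {0..} \<longrightarrow> x 0 = x0 \<longrightarrow> (x \<longlongrightarrow> p) at_top))"

definition asymptotically_stable_equilibrium :: "('a::real_normed_vector \<Rightarrow> 'a) \<Rightarrow> 'a \<Rightarrow> bool" where
  "asymptotically_stable_equilibrium F p \<longleftrightarrow>
     F p = 0 \<and> lyapunov_stable F p \<and> locally_attractive F p"

end

theory Submission
  imports Defs
begin

text \<open>For \<open>\<epsilon> = 0\<close> the temperature modes relax to the slow manifold \<open>T\<^sub>0 = f\<^sub>0(\<eta>)\<close>,
  \<open>T\<^sub>2 = f\<^sub>2(\<eta>)\<close> at the rates \<open>B/R\<close> and \<open>(B + 6D)/R\<close>, and on it the ice line drifts with speed
  \<open>\<epsilon> h(\<eta>)\<close>, \<open>h(\<eta>) = f\<^sub>0(\<eta>) + f\<^sub>2(\<eta>) p\<^sub>2(\<eta>) - T\<^sub>c\<close>. For the given parameters \<open>f\<^sub>0, f\<^sub>2\<close> are explicit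
  polynomials, \<open>h\<close> changes sign on \<open>[0.24, 0.25]\<close> and \<open>h' \<le> -17\<close> on \<open>[0.23, 0.26]\<close>, so \<open>h\<close> has a
  transversal root \<open>e\<close> there. The function
  \<open>W = (T\<^sub>0 - f\<^sub>0(\<eta>))\<^sup>2 + (T\<^sub>2 - f\<^sub>2(\<eta>))\<^sup>2 + (\<eta> - e)\<^sup>2\<close> then satisfies \<open>W' \<le> -17 \<epsilon> W\<close> along \<open>V\<^sup>-\<close> on
  \<open>{W < 10\<^sup>-\<^sup>4}\<close> as soon as \<open>79380 \<epsilon> \<le> B/R\<close>: the fast relaxation dominates every cross term. That
  sublevel set lies in \<open>{\<eta> < \<rho>}\<close>, where \<open>V = V\<^sup>-\<close>, so it is trapping and \<open>W\<close> decays
  exponentially along solutions, giving Lyapunov stability and attraction. Solutions starting there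
  exist for all times because \<open>V\<close> agrees there with a globally Lipschitz field obtained by clamping
  \<open>(T\<^sub>2, \<eta>)\<close> to a box, whose solutions come from Picard iteration in a weighted sup norm.\<close>

lemma has_vector_derivative_fst:
  "(x has_vector_derivative X) F \<Longrightarrow> ((\<lambda>t. fst (x t)) has_vector_derivative fst X) F"
  unfolding has_vector_derivative_def by (drule has_derivative_fst) simp

lemma has_vector_derivative_snd:
  "(x has_vector_derivative X) F \<Longrightarrow> ((\<lambda>t. snd (x t)) has_vector_derivative snd X) F"
  unfolding has_vector_derivative_def by (drule has_derivative_snd) simp

lemma lipschitz_on_fst: "1-lipschitz_on U fst"
  by (rule lipschitz_onI) (auto simp: dist_fst_le)

lemma lipschitz_on_snd: "1-lipschitz_on U snd"
  by (rule lipschitz_onI) (auto simp: dist_snd_le)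

lemma lipschitz_on_compose_into:
  "C-lipschitz_on U f \<Longrightarrow> f ` U \<subseteq> S \<Longrightarrow> D-lipschitz_on S g \<Longrightarrow> (D * C)-lipschitz_on U (\<lambda>x. g (f x))"
  by (rule lipschitz_on_compose2) (auto intro: lipschitz_on_subset)

lemma lipschitz_on_mult_bounded:
  fixes f g :: "'a::metric_space \<Rightarrow> real"
  assumes f: "C-lipschitz_on U f" and g: "D-lipschitz_on U g"
    and f_bound: "\<And>x. x \<in> U \<Longrightarrow> \<bar>f x\<bar> \<le> A" and g_bound: "\<And>x. x \<in> U \<Longrightarrow> \<bar>g x\<bar> \<le> B"
    and "0 \<le> A" "0 \<le> B"
  shows "(B * C + A * D)-lipschitz_on U (\<lambda>x. f x * g x)"
proof (rule lipschitz_onI)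
  fix x y assume xy: "x \<in> U" "y \<in> U"
  have "dist (f x * g x) (f y * g y) = \<bar>(f x - f y) * g x + f y * (g x - g y)\<bar>"
    by (simp add: dist_real_def algebra_simps)
  also have "\<dots> \<le> \<bar>g x\<bar> * dist (f x) (f y) + \<bar>f y\<bar> * dist (g x) (g y)"
    by (simp add: dist_real_def abs_mult abs_triangle_ineq[THEN order_trans] mult.commute)
  also have "\<dots> \<le> B * (C * dist x y) + A * (D * dist x y)"
    using f_bound g_bound xy lipschitz_onD[OF f xy] lipschitz_onD[OF g xy] assms(5,6)
    by (intro add_mono mult_mono) auto
  finally show "dist (f x * g x) (f y * g y) \<le> (B * C + A * D) * dist x y"
    by (simp add: algebra_simps)
qed (use assms(5,6) lipschitz_on_nonneg[OF f] lipschitz_on_nonneg[OF g] in auto)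

lemma MVT_between:
  assumes "\<And>x. (f has_real_derivative f' x) (at x)"
  shows "\<exists>\<xi>. min a b \<le> \<xi> \<and> \<xi> \<le> max a b \<and> f b - f a = (b - a) * f' \<xi>"
proof (cases a b rule: linorder_cases)
  case less
  then obtain \<xi> where "a < \<xi>" "\<xi> < b" "f b - f a = (b - a) * f' \<xi>" using MVT2[OF less assms] by blast
  then show ?thesis using less by (intro exI[of _ \<xi>]) auto
next
  case greater
  then obtain \<xi> where "b < \<xi>" "\<xi> < a" "f a - f b = (a - b) * f' \<xi>" using MVT2[OF greater assms] by blast
  then show ?thesis using greater by (intro exI[of _ \<xi>]) (auto simp: algebra_simps)
qed auto

lemma lipschitz_on_of_deriv_bound:
  assumes "\<And>x. (f has_real_derivative f' x) (at x)" and "\<And>x. x \<in> {a..b} \<Longrightarrow> \<bar>f' x\<bar> \<le> M" and "0 \<le> M"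
  shows "M-lipschitz_on {a..b} f"
proof (rule lipschitz_onI)
  fix x y assume xy: "x \<in> {a..b}" "y \<in> {a..b}"
  obtain \<xi> where \<xi>: "min y x \<le> \<xi>" "\<xi> \<le> max y x" "f x - f y = (x - y) * f' \<xi>"
    using MVT_between[OF assms(1)] by blast
  have "\<xi> \<in> {a..b}" using \<xi> xy by (auto simp: min_def max_def split: if_splits)
  then have "\<bar>f' \<xi>\<bar> \<le> M" by (rule assms(2))
  have "dist (f x) (f y) = \<bar>f' \<xi>\<bar> * dist x y" by (simp add: \<xi>(3) dist_real_def abs_mult)
  also have "\<dots> \<le> M * dist x y" using \<open>\<bar>f' \<xi>\<bar> \<le> M\<close> by (rule mult_right_mono) simp
  finally show "dist (f x) (f y) \<le> M * dist x y" .
qed fact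

lemma dist_triple_power2:
  fixes z z' :: "real \<times> real \<times> real"
  shows "(dist z z')\<^sup>2 = (fst z - fst z')\<^sup>2 + (fst (snd z) - fst (snd z'))\<^sup>2 + (snd (snd z) - snd (snd z'))\<^sup>2"
  by (cases z; cases z') (simp add: dist_Pair_Pair dist_real_def)

section \<open>Global solutions of Lipschitz ODEs\<close>

lemma is_solution_on_continuous_on:
  assumes "is_solution_on F x S" shows "continuous_on S x"
  using assms unfolding is_solution_on_def continuous_on_eq_continuous_within
  by (auto intro: has_vector_derivative_continuous)

lemma is_solution_on_subset:
  assumes "is_solution_on F x S" "T \<subseteq> S" shows "is_solution_on F x T"
  using assms unfolding is_solution_on_def by (auto intro: has_vector_derivative_within_subset)

lemma has_vector_derivative_integral_upper_from_0:
  fixes g :: "real \<Rightarrow> 'a::banach"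
  assumes "continuous_on UNIV g" "0 \<le> u"
  shows "((\<lambda>u. integral {0..u} g) has_vector_derivative g u) (at u within {0..})"
proof -
  have "((\<lambda>u. integral {0..u} g) has_vector_derivative g u) (at u within {0..u+1})"
    by (rule integral_has_vector_derivative) (use assms in \<open>auto intro: continuous_on_subset\<close>)
  moreover have "at u within {0..u+1} = at u within {0..}"
    by (rule at_within_nhd[where S="{u - 1 <..< u + 1}"]) auto
  ultimately show ?thesis by simp
qed

lemma norm_integral_le_exp_bound:
  fixes g :: "real \<Rightarrow> 'a::banach"
  assumes k: "0 < k" and t: "0 \<le> t" and g: "continuous_on {0..t} g"
    and bound: "\<And>w. w \<in> {0..t} \<Longrightarrow> norm (g w) \<le> C * exp (k*w)"
  shows "norm (integral {0..t} g) \<le> C * ((exp (k*t) - 1) / k)"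
proof -
  have "((\<lambda>w. exp (k*w)) has_integral (exp (k*t)/k - exp (k*0)/k)) {0..t}"
    using k t by (intro fundamental_theorem_of_calculus)
      (auto intro!: derivative_eq_intros simp: has_real_derivative_iff_has_vector_derivative[symmetric])
  then have exp_int: "((\<lambda>w. C * exp (k*w)) has_integral C * ((exp (k*t) - 1) / k)) {0..t}"
    by (simp add: diff_divide_distrib has_integral_mult_right)
  have "norm (integral {0..t} g) \<le> integral {0..t} (\<lambda>w. C * exp (k*w))"
    by (rule integral_norm_bound_integral) (use g bound exp_int in \<open>auto intro: integrable_continuous_interval\<close>)
  also have "\<dots> = C * ((exp (k*t) - 1) / k)" using exp_int by (rule integral_unique)
  finally show ?thesis .
qed

lemma exp_neg_mult_exp_integral_le:
  fixes k t C :: real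
  assumes "0 < k" "0 \<le> t" "0 \<le> C"
  shows "exp (-k*t) * (C * ((exp (k*t) - 1) / k)) \<le> C / k"
proof -
  have "exp (-k*t) * (C * ((exp (k*t) - 1) / k)) = C * (1 - exp (-k*t)) / k"
    by (simp add: field_simps exp_minus exp_add[symmetric])
  also have "\<dots> \<le> C / k" using assms by (intro divide_right_mono) (auto intro!: mult_left_le)
  finally show ?thesis .
qed

text \<open>Bielecki's trick: a solution on \<open>[0, \<infinity>)\<close> is sought as \<open>x t = exp (k t) y t\<close> with \<open>y\<close>
  bounded and continuous; for \<open>k = 2 L\<close> the Picard operator transported to \<open>y\<close> is a contraction
  for the sup norm. The \<open>max 0 t\<close> merely extends it to negative times.\<close>

definition weighted_picard :: "('a::banach \<Rightarrow> 'a) \<Rightarrow> real \<Rightarrow> 'a \<Rightarrow> (real \<Rightarrow>\<^sub>C 'a) \<Rightarrow> real \<Rightarrow> 'a" where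
  "weighted_picard G k x0 y t = exp (-k * max 0 t) *\<^sub>R
     (x0 + integral {0..max 0 t} (\<lambda>w. G (exp (k*w) *\<^sub>R apply_bcontfun y w)))"

context
  fixes G :: "'a::banach \<Rightarrow> 'a" and L :: real
  assumes L_pos: "0 < L" and G_lip: "L-lipschitz_on UNIV G"
begin

private lemma continuous_on_G: "continuous_on UNIV G"
  using G_lip by (rule lipschitz_on_continuous_on)

private lemma continuous_on_G_weighted:
  "continuous_on UNIV (\<lambda>w. G (exp (k*w) *\<^sub>R apply_bcontfun y w))"
  by (rule continuous_on_compose2[OF continuous_on_G]) (auto intro!: continuous_intros)

lemma continuous_on_weighted_picard: "continuous_on UNIV (weighted_picard G k x0 y)"
proof -
  have "continuous_on {0..} (\<lambda>u. integral {0..u} (\<lambda>w. G (exp (k*w) *\<^sub>R apply_bcontfun y w)))"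
    unfolding continuous_on_eq_continuous_within
    using has_vector_derivative_continuous[OF has_vector_derivative_integral_upper_from_0[OF continuous_on_G_weighted]]
    by auto
  then have "continuous_on UNIV (\<lambda>t. integral {0..max 0 t} (\<lambda>w. G (exp (k*w) *\<^sub>R apply_bcontfun y w)))"
    by (rule continuous_on_compose2) (auto intro!: continuous_intros)
  then show ?thesis
    unfolding weighted_picard_def[abs_def] by (auto intro!: continuous_intros)
qed

lemma weighted_picard_bcontfun:
  assumes k: "0 < k"
  shows "weighted_picard G k x0 y \<in> bcontfun"
proof -
  obtain B where B: "\<And>w. norm (apply_bcontfun y w) \<le> B"
    using bounded_apply_bcontfun[of y] unfolding bounded_iff by auto
  have B0: "0 \<le> B" using B[of 0] norm_ge_zero order_trans by blast
  define C where "C = norm (G 0) + L * B"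
  have C0: "0 \<le> C" using B0 L_pos by (simp add: C_def)
  have bound: "norm (G (exp (k*w) *\<^sub>R apply_bcontfun y w)) \<le> C * exp (k*w)" if "0 \<le> w" for w
  proof -
    have "norm (G (exp (k*w) *\<^sub>R apply_bcontfun y w))
        \<le> norm (G 0) + L * norm (exp (k*w) *\<^sub>R apply_bcontfun y w)"
      using lipschitz_on_normD[OF G_lip, of "exp (k*w) *\<^sub>R apply_bcontfun y w" 0]
        norm_triangle_sub[of "G (exp (k*w) *\<^sub>R apply_bcontfun y w)" "G 0"] by simp
    also have "\<dots> \<le> norm (G 0) * exp (k*w) + L * (exp (k*w) * B)"
      using B[of w] L_pos that k by (intro add_mono mult_left_mono) (auto simp: mult_le_cancel_left1)
    finally show ?thesis by (simp add: C_def algebra_simps)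
  qed
  have "norm (weighted_picard G k x0 y t) \<le> norm x0 + C / k" for t
  proof -
    let ?m = "max 0 t"
    have "norm (weighted_picard G k x0 y t)
        = exp (-k * ?m) * norm (x0 + integral {0..?m} (\<lambda>w. G (exp (k*w) *\<^sub>R apply_bcontfun y w)))"
      by (simp add: weighted_picard_def)
    also have "\<dots> \<le> exp (-k * ?m) * (norm x0 + C * ((exp (k*?m) - 1) / k))"
      by (intro mult_left_mono norm_triangle_le add_left_mono norm_integral_le_exp_bound[OF k])
        (auto intro: bound continuous_on_subset[OF continuous_on_G_weighted])
    also have "\<dots> \<le> norm x0 + C / k"
      using exp_neg_mult_exp_integral_le[OF k _ C0, of ?m] k
      by (simp add: distrib_left mult_left_le_one_le add_mono)
    finally show ?thesis .
  qed
  then show ?thesis by (rule bcontfun_normI[OF continuous_on_weighted_picard])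
qed

lemma weighted_picard_contraction:
  "dist (Bcontfun (weighted_picard G (2*L) x0 y1)) (Bcontfun (weighted_picard G (2*L) x0 y2))
     \<le> 1/2 * dist y1 y2"
proof (rule dist_bound)
  fix t :: real
  let ?m = "max 0 t" and ?D = "dist y1 y2" and ?k = "2*L"
  let ?f = "\<lambda>y w. G (exp (?k*w) *\<^sub>R apply_bcontfun y w)"
  have k: "0 < ?k" using L_pos by simp
  have bound: "norm (?f y1 w - ?f y2 w) \<le> (L * ?D) * exp (?k*w)" for w
  proof -
    have "norm (?f y1 w - ?f y2 w) \<le> L * (exp (?k*w) * dist (apply_bcontfun y1 w) (apply_bcontfun y2 w))"
      using lipschitz_on_normD[OF G_lip, of "exp (?k*w) *\<^sub>R apply_bcontfun y1 w" "exp (?k*w) *\<^sub>R apply_bcontfun y2 w"]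
      by (simp add: dist_norm scaleR_diff_right[symmetric])
    also have "\<dots> \<le> L * (exp (?k*w) * ?D)" using L_pos by (auto intro!: mult_left_mono dist_bounded)
    finally show ?thesis by (simp add: algebra_simps)
  qed
  have "integral {0..?m} (?f y1) - integral {0..?m} (?f y2) = integral {0..?m} (\<lambda>w. ?f y1 w - ?f y2 w)"
    by (rule integral_diff[symmetric])
      (auto intro!: integrable_continuous_interval continuous_on_subset[OF continuous_on_G_weighted])
  then have "dist (weighted_picard G ?k x0 y1 t) (weighted_picard G ?k x0 y2 t)
      = exp (-?k * ?m) * norm (integral {0..?m} (\<lambda>w. ?f y1 w - ?f y2 w))"
    unfolding weighted_picard_def dist_norm by (simp add: scaleR_diff_right[symmetric])
  also have "\<dots> \<le> exp (-?k * ?m) * ((L * ?D) * ((exp (?k*?m) - 1) / ?k))"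
    by (intro mult_left_mono norm_integral_le_exp_bound[OF k] bound)
      (auto intro!: continuous_intros continuous_on_subset[OF continuous_on_G_weighted])
  also have "\<dots> \<le> (L * ?D) / ?k" by (rule exp_neg_mult_exp_integral_le[OF k]) (use L_pos in auto)
  finally show "dist (apply_bcontfun (Bcontfun (weighted_picard G ?k x0 y1)) t)
      (apply_bcontfun (Bcontfun (weighted_picard G ?k x0 y2)) t) \<le> 1/2 * ?D"
    using L_pos k by (simp add: Bcontfun_inverse weighted_picard_bcontfun)
qed

lemma picard_fixed_point_solution: "\<exists>x. is_solution_on G x {0..} \<and> x 0 = x0"
proof -
  let ?k = "2*L"
  obtain y where y_fixed: "Bcontfun (weighted_picard G ?k x0 y) = y"
    using banach_fix_type[of "1/2" "\<lambda>y. Bcontfun (weighted_picard G ?k x0 y)"] weighted_picard_contraction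
    by auto
  define x where "x t = exp (?k*t) *\<^sub>R apply_bcontfun y t" for t
  have x_eq: "x t = x0 + integral {0..t} (\<lambda>w. G (x w))" if "0 \<le> t" for t
  proof -
    have "apply_bcontfun y t = weighted_picard G ?k x0 y t"
      using y_fixed weighted_picard_bcontfun[of ?k x0 y] L_pos by (metis Bcontfun_inverse mult_pos_pos zero_less_numeral)
    then show ?thesis
      using that by (simp add: weighted_picard_def x_def[abs_def] exp_minus[symmetric] exp_add[symmetric])
  qed
  have G_x: "continuous_on UNIV (\<lambda>w. G (x w))"
    using continuous_on_G_weighted by (simp add: x_def[abs_def])
  have "is_solution_on G x {0..}"
    unfolding is_solution_on_def
  proof
    fix t :: real assume t: "t \<in> {0..}"
    have "((\<lambda>t. x0 + integral {0..t} (\<lambda>w. G (x w))) has_vector_derivative G (x t)) (at t within {0..})"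
      using has_vector_derivative_integral_upper_from_0[OF G_x] t by (auto intro!: derivative_eq_intros)
    then show "(x has_vector_derivative G (x t)) (at t within {0..})"
      by (rule has_vector_derivative_transform_within[where d=1]) (use t x_eq in auto)
  qed
  then show ?thesis using x_eq[of 0] by auto
qed

end

lemma lipschitz_ode_solution_exists:
  fixes G :: "'a::banach \<Rightarrow> 'a"
  assumes "L-lipschitz_on UNIV G"
  shows "\<exists>x. is_solution_on G x {0..} \<and> x 0 = x0"
  using lipschitz_on_nonneg[OF assms] lipschitz_on_le[OF assms, of "L + 1"]
  by (intro picard_fixed_point_solution[of "L + 1"]) auto

section \<open>Lyapunov functions\<close>

lemma exp_weighted_lyapunov_le:
  fixes F :: "'a::real_normed_vector \<Rightarrow> 'a" and W :: "'a \<Rightarrow> real"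
  assumes W_cont: "continuous_on UNIV W"
    and W_deriv: "\<And>x t. W (x t) < c \<Longrightarrow> (x has_vector_derivative F (x t)) (at t) \<Longrightarrow>
        \<exists>D. ((\<lambda>t. W (x t)) has_real_derivative D) (at t) \<and> D \<le> -k * W (x t)"
    and sol: "is_solution_on F x {0..T}" and t1: "0 \<le> t1" "t1 \<le> T"
    and below: "\<And>r. 0 \<le> r \<Longrightarrow> r < t1 \<Longrightarrow> W (x r) < c"
  shows "W (x t1) * exp (k*t1) \<le> W (x 0)"
proof -
  define g where "g r = W (x r) * exp (k*r)" for r
  have "g t1 \<le> g 0"
  proof (rule DERIV_nonpos_imp_decreasing_open[OF t1(1)])
    fix r assume r: "0 < r" "r < t1"
    have "at r within {0..T} = at r"
      by (rule at_within_interior) (use r t1 in auto)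
    moreover have "(x has_vector_derivative F (x r)) (at r within {0..T})"
      using sol r t1 by (auto simp: is_solution_on_def)
    ultimately have "(x has_vector_derivative F (x r)) (at r)" by simp
    moreover have "W (x r) < c" using below r by simp
    ultimately obtain D where D: "((\<lambda>t. W (x t)) has_real_derivative D) (at r)" "D \<le> -k * W (x r)"
      using W_deriv by blast
    have "(g has_real_derivative D * exp (k*r) + W (x r) * (exp (k*r) * k)) (at r)"
      unfolding g_def[abs_def] by (auto intro!: derivative_eq_intros D(1))
    moreover have "D * exp (k*r) + W (x r) * (exp (k*r) * k) \<le> 0"
      using mult_right_mono[OF D(2), of "exp (k*r)"] by (simp add: algebra_simps)
    ultimately show "\<exists>y. (g has_real_derivative y) (at r) \<and> y \<le> 0" by blast
  next
    have "continuous_on {0..t1} x"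
      using is_solution_on_continuous_on[OF sol] t1 by (auto intro: continuous_on_subset)
    then show "continuous_on {0..t1} g"
      unfolding g_def by (intro continuous_intros continuous_on_compose2[OF W_cont]) auto
  qed
  then show ?thesis by (simp add: g_def)
qed

lemma lyapunov_sublevel_decay:
  fixes F :: "'a::real_normed_vector \<Rightarrow> 'a" and W :: "'a \<Rightarrow> real"
  assumes W_cont: "continuous_on UNIV W" and W_nonneg: "\<And>z. 0 \<le> W z" and k: "0 \<le> k"
    and W_deriv: "\<And>x t. W (x t) < c \<Longrightarrow> (x has_vector_derivative F (x t)) (at t) \<Longrightarrow>
        \<exists>D. ((\<lambda>t. W (x t)) has_real_derivative D) (at t) \<and> D \<le> -k * W (x t)"
    and sol: "is_solution_on F x {0..T}" and W0: "W (x 0) < c" and t: "t \<in> {0..T}"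
  shows "W (x t) < c" "W (x t) \<le> W (x 0) * exp (-k*t)"
proof -
  note exp_weighted = exp_weighted_lyapunov_le[OF W_cont W_deriv sol]
  have stays: "\<forall>r\<in>{0..T}. W (x r) < c"
  proof (rule ccontr)
    define A where "A = {0..T} \<inter> (\<lambda>r. W (x r)) -` {c..}"
    assume "\<not> (\<forall>r\<in>{0..T}. W (x r) < c)"
    then have "A \<noteq> {}" by (auto simp: A_def not_less)
    moreover have A_bdd: "bdd_below A" by (auto simp: A_def bdd_below_def)
    moreover have "closed A" unfolding A_def
      by (rule continuous_closed_preimage)
        (auto intro: continuous_on_compose2[OF W_cont is_solution_on_continuous_on[OF sol]])
    ultimately have first_exit: "Inf A \<in> A" by (rule closed_contains_Inf)
    have "W (x r) < c" if "0 \<le> r" "r < Inf A" for r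
    proof (rule ccontr)
      assume "\<not> W (x r) < c"
      then have "r \<in> A" using that first_exit by (auto simp: A_def)
      then show False using cInf_lower[OF _ A_bdd, of r] that by simp
    qed
    then have "W (x (Inf A)) * exp (k * Inf A) \<le> W (x 0)"
      using first_exit by (intro exp_weighted) (auto simp: A_def)
    moreover have "W (x (Inf A)) \<le> W (x (Inf A)) * exp (k * Inf A)"
      using first_exit k W_nonneg[of "x (Inf A)"] by (auto simp: A_def intro!: mult_le_cancel_left1[THEN iffD2])
    ultimately show False using W0 first_exit by (auto simp: A_def)
  qed
  then show "W (x t) < c" using t by blast
  have "W (x t) * exp (k*t) \<le> W (x 0)"
    by (rule exp_weighted) (use t stays in auto)
  then show "W (x t) \<le> W (x 0) * exp (-k*t)"
    by (simp add: exp_minus field_simps)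
qed

context
  fixes F :: "'a::real_normed_vector \<Rightarrow> 'a" and W :: "'a \<Rightarrow> real" and p :: 'a and k c M :: real
  assumes W_cont: "continuous_on UNIV W" and W_nonneg: "\<And>z. 0 \<le> W z" and W_p: "W p = 0"
    and k: "0 < k" and c: "0 < c"
    and W_deriv: "\<And>x t. W (x t) < c \<Longrightarrow> (x has_vector_derivative F (x t)) (at t) \<Longrightarrow>
        \<exists>D. ((\<lambda>t. W (x t)) has_real_derivative D) (at t) \<and> D \<le> -k * W (x t)"
    and dist_le: "\<And>z. W z < c \<Longrightarrow> (dist z p)\<^sup>2 \<le> M * W z" and M: "0 \<le> M"
begin

private lemma decay:
  assumes "is_solution_on F x {0..T}" "W (x 0) < c" "t \<in> {0..T}"
  shows "W (x t) < c" "W (x t) \<le> W (x 0) * exp (-k*t)"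
  using lyapunov_sublevel_decay[where F=F and c=c, OF W_cont W_nonneg less_imp_le[OF k] W_deriv assms]
  by auto

private lemma near: "0 < \<eta> \<Longrightarrow> \<exists>d>0. \<forall>z. dist z p < d \<longrightarrow> W z < \<eta>"
proof -
  assume \<eta>: "0 < \<eta>"
  have "isCont W p" using W_cont by (simp add: continuous_on_eq_continuous_at)
  then obtain d where "0 < d" "\<forall>z. dist z p < d \<longrightarrow> dist (W z) (W p) < \<eta>"
    using \<eta> unfolding continuous_at_eps_delta by blast
  with W_p show ?thesis by (auto simp: dist_real_def abs_less_iff)
qed

lemma lyapunov_stableI_lyapunov: "lyapunov_stable F p"
  unfolding lyapunov_stable_def
proof (intro allI impI)
  fix e :: real assume e: "0 < e"
  obtain d where d: "0 < d" "\<And>z. dist z p < d \<Longrightarrow> W z < min c (e\<^sup>2 / (M + 1))"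
    using near[of "min c (e\<^sup>2 / (M + 1))"] c e M by auto
  show "\<exists>d>0. \<forall>x T. 0 \<le> T \<longrightarrow> is_solution_on F x {0..T} \<longrightarrow> dist (x 0) p < d \<longrightarrow>
      (\<forall>t\<in>{0..T}. dist (x t) p < e)"
  proof (intro exI[of _ d] conjI allI impI ballI d(1))
    fix x T t
    assume "0 \<le> T" and sol: "is_solution_on F x {0..T}" and x0: "dist (x 0) p < d" and t: "t \<in> {0..T}"
    have W0: "W (x 0) < c" "W (x 0) < e\<^sup>2 / (M + 1)" using d(2)[OF x0] by auto
    have "W (x 0) * exp (-k*t) \<le> W (x 0)"
      using W_nonneg[of "x 0"] k t by (auto intro!: mult_left_le)
    then have "W (x t) \<le> W (x 0)" using decay(2)[OF sol W0(1) t] by linarith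
    have "(dist (x t) p)\<^sup>2 \<le> M * W (x t)" by (rule dist_le[OF decay(1)[OF sol W0(1) t]])
    also have "\<dots> \<le> M * W (x 0)" using \<open>W (x t) \<le> W (x 0)\<close> M by (rule mult_left_mono)
    also have "\<dots> \<le> (M + 1) * W (x 0)" using W_nonneg[of "x 0"] by (simp add: distrib_right)
    also have "\<dots> < e\<^sup>2" using W0(2) M by (simp add: less_divide_eq mult.commute)
    finally show "dist (x t) p < e" using e by (simp add: power_less_imp_less_base)
  qed
qed

lemma locally_attractiveI_lyapunov:
  assumes solvable: "\<And>x0. W x0 < c \<Longrightarrow> \<exists>x. is_solution_on F x {0..} \<and> x 0 = x0"
  shows "locally_attractive F p"
  unfolding locally_attractive_def
proof -
  obtain d where d: "0 < d" "\<And>z. dist z p < d \<Longrightarrow> W z < c"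
    using near[OF c] by auto
  show "\<exists>d>0. \<forall>x0. dist x0 p < d \<longrightarrow> (\<exists>x. is_solution_on F x {0..} \<and> x 0 = x0) \<and>
      (\<forall>x. is_solution_on F x {0..} \<longrightarrow> x 0 = x0 \<longrightarrow> (x \<longlongrightarrow> p) at_top)"
  proof (intro exI[of _ d] conjI allI impI d(1))
    show "\<exists>x. is_solution_on F x {0..} \<and> x 0 = x0" if "dist x0 p < d" for x0
      using solvable d(2) that by blast
  next
    fix x0 x assume "dist x0 p < d" "is_solution_on F x {0..}" "x 0 = x0"
    then have sol: "is_solution_on F x {0..}" and x0: "dist (x 0) p < d" by simp_all
    have bound: "dist (x t) p \<le> sqrt (M * W (x 0) * exp (-k*t))" if t: "0 \<le> t" for t
    proof -
      have sol_t: "is_solution_on F x {0..t}" using sol by (rule is_solution_on_subset) auto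
      have "(dist (x t) p)\<^sup>2 \<le> M * W (x t)" using dist_le decay(1)[OF sol_t d(2)[OF x0]] t by simp
      also have "\<dots> \<le> M * W (x 0) * exp (-k*t)"
        using mult_left_mono[OF decay(2)[OF sol_t d(2)[OF x0]] M] t by (simp add: mult.assoc)
      finally show ?thesis by (rule real_le_rsqrt)
    qed
    have "((\<lambda>t. exp (-k*t)) \<longlongrightarrow> 0) at_top"
      using k by (intro filterlim_compose[OF exp_at_bot] filterlim_tendsto_neg_mult_at_bot[OF tendsto_const _ filterlim_ident]) auto
    then have lim: "((\<lambda>t. sqrt (M * W (x 0) * exp (-k*t))) \<longlongrightarrow> 0) at_top"
      using tendsto_real_sqrt[OF tendsto_mult_left[of _ 0 _ "M * W (x 0)"]] by simp
    have ev: "\<forall>\<^sub>F t in at_top. dist (x t) p \<le> sqrt (M * W (x 0) * exp (-k*t))"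
      unfolding eventually_at_top_linorder by (intro exI[of _ 0] allI impI bound)
    have "((\<lambda>t. dist (x t) p) \<longlongrightarrow> 0) at_top"
      by (rule tendsto_sandwich[OF _ ev tendsto_const lim]) simp
    then show "(x \<longlongrightarrow> p) at_top" by (rule tendsto_dist_iff[THEN iffD2])
  qed
qed

lemma asymptotically_stable_equilibriumI_lyapunov:
  assumes "F p = 0" and "\<And>x0. W x0 < c \<Longrightarrow> \<exists>x. is_solution_on F x {0..} \<and> x 0 = x0"
  shows "asymptotically_stable_equilibrium F p"
  using assms lyapunov_stableI_lyapunov locally_attractiveI_lyapunov
  by (simp add: asymptotically_stable_equilibrium_def)

end

section \<open>The Jormungand coefficients in closed form\<close>

lemma sint_eq_antiderivative_diff:
  assumes "\<And>x. (P has_real_derivative f x) (at x)"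
  shows "sint a b f = P b - P a"
proof -
  have "integral {c..d} f = P d - P c" if "c \<le> d" for c d
    using assms that
    by (intro integral_unique fundamental_theorem_of_calculus)
      (auto simp: has_real_derivative_iff_has_vector_derivative[symmetric] intro: has_field_derivative_at_within)
  then show ?thesis unfolding sint_def by (smt (verit))
qed

definition q0_antideriv :: "real \<Rightarrow> real" where
  "q0_antideriv y = y + s2 * (y^3/2 - y/2)"

definition q2_antideriv :: "real \<Rightarrow> real" where
  "q2_antideriv y = (y^3/2 - y/2) + s2 * (9/20*y^5 - y^3/2 + y/4)"

lemma sint_q0: "sint a b q0 = q0_antideriv b - q0_antideriv a"
  by (rule sint_eq_antiderivative_diff)
    (auto intro!: derivative_eq_intros simp: q0_antideriv_def q0_def s_def p2_def s0_def field_simps)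

lemma sint_q2: "sint a b q2 = q2_antideriv b - q2_antideriv a"
  by (rule sint_eq_antiderivative_diff)
    (auto intro!: derivative_eq_intros simp: q2_antideriv_def q2_def s_def p2_def s0_def field_simps
      power2_eq_square power4_eq_xxxx)

lemma fminus0_eq: "fminus0 \<eta> = -17208106841/760000000 + 795117/95000*\<eta> - 153117/95000*\<eta>^3"
  unfolding fminus0_def abar0_def sint_q0 q0_antideriv_def Qc_def Ac_def Bc_def alpha1_def alphai_def
    alpha2_def s0_def s2_def rho_def
  by (simp add: field_simps)

lemma fminus2_eq:
  "fminus2 \<eta> = -51878091740481/1088000000000 - 795117/68000*\<eta> + 474117/34000*\<eta>^3 - 1378053/340000*\<eta>^5"
  unfolding fminus2_def abar2_def sint_q2 q2_antideriv_def Qc_def Ac_def Bc_def Dc_def alpha1_def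
    alphai_def alpha2_def s0_def s2_def rho_def
  by (simp add: field_simps)

definition fminus0' :: "real \<Rightarrow> real" where
  "fminus0' \<eta> = 795117/95000 - 459351/95000*\<eta>^2"

definition fminus2' :: "real \<Rightarrow> real" where
  "fminus2' \<eta> = - 795117/68000 + 1422351/34000*\<eta>^2 - 1378053/68000*\<eta>^4"

lemma has_real_derivative_fminus0: "(fminus0 has_real_derivative fminus0' \<eta>) (at \<eta>)"
  unfolding fminus0_eq[abs_def] fminus0'_def
  by (auto intro!: derivative_eq_intros simp: field_simps power2_eq_square)

lemma has_real_derivative_fminus2: "(fminus2 has_real_derivative fminus2' \<eta>) (at \<eta>)"
  unfolding fminus2_eq[abs_def] fminus2'_def
  by (auto intro!: derivative_eq_intros simp: field_simps power2_eq_square power4_eq_xxxx)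

lemma has_real_derivative_p2: "(p2 has_real_derivative 3*\<eta>) (at \<eta>)"
  unfolding p2_def[abs_def] by (auto intro!: derivative_eq_intros simp: field_simps power2_eq_square)

text \<open>The \<open>\<eta>\<close>-equation on the slow manifold \<open>T\<^sub>0 = f\<^sub>0(\<eta>)\<close>, \<open>T\<^sub>2 = f\<^sub>2(\<eta>)\<close>, divided by \<open>\<epsilon>\<close>.\<close>

definition slow_drift :: "real \<Rightarrow> real" where
  "slow_drift \<eta> = fminus0 \<eta> + fminus2 \<eta> * p2 \<eta> - Tc"

definition slow_drift' :: "real \<Rightarrow> real" where
  "slow_drift' \<eta> = fminus0' \<eta> + fminus2' \<eta> * p2 \<eta> + fminus2 \<eta> * (3*\<eta>)"

lemma has_real_derivative_slow_drift: "(slow_drift has_real_derivative slow_drift' \<eta>) (at \<eta>)"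
  unfolding slow_drift_def[abs_def] slow_drift'_def
  by (auto intro!: derivative_eq_intros has_real_derivative_fminus0 has_real_derivative_fminus2
      has_real_derivative_p2 simp: field_simps)

lemma window_bounds:
  assumes "\<eta> \<in> {23/100..26/100}"
  shows "\<bar>fminus0' \<eta>\<bar> \<le> 20" "\<bar>fminus2' \<eta>\<bar> \<le> 20" "-52 \<le> fminus2 \<eta>" "fminus2 \<eta> \<le> -48"
    "\<bar>p2 \<eta>\<bar> \<le> 1/2" "-41 \<le> slow_drift' \<eta>" "slow_drift' \<eta> \<le> -17"
proof -
  have pow: "(23/100)^n \<le> \<eta>^n \<and> \<eta>^n \<le> (26/100)^n" for n
    using assms by (auto intro: power_mono)
  note \<eta>2 = pow[of 2, simplified power_divide, simplified] and \<eta>3 = pow[of 3, simplified power_divide, simplified]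
    and \<eta>4 = pow[of 4, simplified power_divide, simplified] and \<eta>5 = pow[of 5, simplified power_divide, simplified]
  have f0': "8 \<le> fminus0' \<eta>" "fminus0' \<eta> \<le> 82/10" using \<eta>2 unfolding fminus0'_def by auto
  have f2': "-10 \<le> fminus2' \<eta>" "fminus2' \<eta> \<le> -85/10" using \<eta>2 \<eta>4 unfolding fminus2'_def by auto
  have f2: "-52 \<le> fminus2 \<eta>" "fminus2 \<eta> \<le> -48" using assms \<eta>3 \<eta>5 unfolding fminus2_eq by auto
  have p: "-1/2 \<le> p2 \<eta>" "p2 \<eta> \<le> -39/100" using \<eta>2 unfolding p2_def by auto
  show "\<bar>fminus0' \<eta>\<bar> \<le> 20" "\<bar>fminus2' \<eta>\<bar> \<le> 20" "-52 \<le> fminus2 \<eta>" "fminus2 \<eta> \<le> -48"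
    "\<bar>p2 \<eta>\<bar> \<le> 1/2" using f0' f2' f2 p by auto
  have "0 \<le> fminus2' \<eta> * p2 \<eta>" "fminus2' \<eta> * p2 \<eta> \<le> 5"
    using mult_mono[of "- fminus2' \<eta>" 10 "- p2 \<eta>" "1/2"] f2' p by (auto intro: mult_nonpos_nonpos)
  moreover have "(- fminus2 \<eta>) * (3*\<eta>) \<le> 52 * (78/100)" "48 * (69/100) \<le> (- fminus2 \<eta>) * (3*\<eta>)"
    using f2 assms by (intro mult_mono; simp)+
  then have "-41 \<le> fminus2 \<eta> * (3*\<eta>)" "fminus2 \<eta> * (3*\<eta>) \<le> -33" by (auto simp: algebra_simps)
  ultimately show "-41 \<le> slow_drift' \<eta>" "slow_drift' \<eta> \<le> -17"
    unfolding slow_drift'_def using f0' by linarith+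
qed

lemma slow_drift_has_root: "\<exists>e\<in>{24/100..25/100}. slow_drift e = 0"
proof -
  have "slow_drift (24/100) > 0" "slow_drift (25/100) < 0"
    unfolding slow_drift_def fminus0_eq fminus2_eq p2_def Tc_def by (simp_all add: power_divide)
  moreover have "continuous_on {24/100..25/100} slow_drift"
    using has_real_derivative_slow_drift by (auto intro!: continuous_at_imp_continuous_on DERIV_isCont)
  ultimately show ?thesis using IVT2'[of slow_drift "25/100" 0 "24/100"] by auto
qed

lemma lipschitz_on_window:
  "20-lipschitz_on {23/100..26/100} fminus0" "20-lipschitz_on {23/100..26/100} fminus2"
  "1-lipschitz_on {23/100..26/100} p2"
  by (rule lipschitz_on_of_deriv_bound[OF has_real_derivative_fminus0], use window_bounds in auto)
    (rule lipschitz_on_of_deriv_bound[OF has_real_derivative_fminus2], use window_bounds in auto,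
     rule lipschitz_on_of_deriv_bound[OF has_real_derivative_p2], auto)

lemma slow_drift_slope:
  assumes e: "e \<in> {24/100..25/100}" "slow_drift e = 0" and \<eta>: "\<bar>\<eta> - e\<bar> \<le> 1/100"
  shows "slow_drift \<eta> * (\<eta> - e) \<le> -17 * (\<eta> - e)\<^sup>2" "\<bar>slow_drift \<eta>\<bar> \<le> 41 * \<bar>\<eta> - e\<bar>"
proof -
  obtain \<xi> where \<xi>: "min e \<eta> \<le> \<xi>" "\<xi> \<le> max e \<eta>" "slow_drift \<eta> = (\<eta> - e) * slow_drift' \<xi>"
    using MVT_between[OF has_real_derivative_slow_drift, of e \<eta>] e by auto
  have "\<xi> \<in> {23/100..26/100}" using \<xi> e \<eta> by (auto simp: abs_le_iff min_def max_def split: if_splits)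
  note bounds = window_bounds(6,7)[OF this]
  have "slow_drift \<eta> * (\<eta> - e) = slow_drift' \<xi> * (\<eta> - e)\<^sup>2" by (simp add: \<xi>(3) power2_eq_square)
  also have "\<dots> \<le> -17 * (\<eta> - e)\<^sup>2" using bounds by (intro mult_right_mono) auto
  finally show "slow_drift \<eta> * (\<eta> - e) \<le> -17 * (\<eta> - e)\<^sup>2" .
  have "\<bar>slow_drift \<eta>\<bar> = \<bar>slow_drift' \<xi>\<bar> * \<bar>\<eta> - e\<bar>" by (simp add: \<xi>(3) abs_mult)
  also have "\<dots> \<le> 41 * \<bar>\<eta> - e\<bar>" using bounds by (intro mult_right_mono) auto
  finally show "\<bar>slow_drift \<eta>\<bar> \<le> 41 * \<bar>\<eta> - e\<bar>" .
qed

text \<open>Here \<open>u = T\<^sub>0 - f\<^sub>0(\<eta>)\<close>, \<open>v = T\<^sub>2 - f\<^sub>2(\<eta>)\<close>, \<open>w = \<eta> - e\<close>, \<open>H\<close> is the slow drift at \<open>\<eta>\<close> and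
  \<open>A\<^sub>0, A\<^sub>2, P\<close> are \<open>f\<^sub>0', f\<^sub>2', p\<^sub>2\<close> at \<open>\<eta>\<close>; the left-hand side collects the terms of the derivative of
  \<open>(u\<^sup>2 + v\<^sup>2 + w\<^sup>2)/(2\<epsilon>)\<close> that do not come from the fast relaxation.\<close>

lemma slow_terms_le:
  fixes u v w H P A0 A2 :: real
  assumes A0: "\<bar>A0\<bar> \<le> 20" and A2: "\<bar>A2\<bar> \<le> 20" and P: "\<bar>P\<bar> \<le> 1"
    and H_sign: "H*w \<le> -17*w\<^sup>2" and H_bound: "\<bar>H\<bar> \<le> 41*\<bar>w\<bar>"
  shows "-((H + u + v * P)*(A0*u + A2 * v)) + H*w + w*(u + v * P) \<le> 39690*(u\<^sup>2 + v\<^sup>2) - 17/2*w\<^sup>2"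
proof -
  define S where "S = \<bar>u\<bar> + \<bar>v\<bar>"
  have vP: "\<bar>v * P\<bar> \<le> \<bar>v\<bar>" using P by (simp add: abs_mult mult_left_le)
  have "\<bar>A0*u + A2 * v\<bar> \<le> \<bar>A0\<bar>*\<bar>u\<bar> + \<bar>A2\<bar>*\<bar>v\<bar>" by (metis abs_mult abs_triangle_ineq)
  also have "\<dots> \<le> 20*\<bar>u\<bar> + 20*\<bar>v\<bar>" using A0 A2 by (intro add_mono mult_right_mono) auto
  finally have AX: "\<bar>A0*u + A2 * v\<bar> \<le> 20*S" by (simp add: S_def)
  have "\<bar>H + u + v * P\<bar> \<le> 41*\<bar>w\<bar> + S" using H_bound vP unfolding S_def by linarith
  then have "\<bar>H + u + v * P\<bar>*\<bar>A0*u + A2 * v\<bar> \<le> (41*\<bar>w\<bar> + S)*(20*S)"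
    using AX by (intro mult_mono) auto
  then have "-((H + u + v * P)*(A0*u + A2 * v)) \<le> (41*\<bar>w\<bar> + S)*(20*S)"
    by (simp add: abs_mult[symmetric])
  moreover have "w*(u + v * P) \<le> \<bar>w\<bar>*S"
  proof -
    have "w*(u + v * P) \<le> \<bar>w\<bar>*\<bar>u + v * P\<bar>" by (simp add: abs_mult[symmetric])
    also have "\<dots> \<le> \<bar>w\<bar>*S" using vP unfolding S_def by (intro mult_left_mono) auto
    finally show ?thesis .
  qed
  \<comment> \<open>AM-GM, weighted so that half of the \<open>-17 w\<^sup>2\<close> supplied by the slow drift survives\<close>
  moreover have "1642*(\<bar>w\<bar>*S) \<le> 17*w\<^sup>2 + 39650*S\<^sup>2"
  proof -
    have "27914*(\<bar>w\<bar>*S) \<le> 289*w\<^sup>2 + 674041*S\<^sup>2"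
      using zero_le_power2[of "17*\<bar>w\<bar> - 821*S"] by (simp add: power2_eq_square algebra_simps)
    then show ?thesis using zero_le_power2[of S] by linarith
  qed
  moreover have "S\<^sup>2 \<le> 2*(u\<^sup>2 + v\<^sup>2)"
    using zero_le_power2[of "\<bar>u\<bar> - \<bar>v\<bar>"] unfolding S_def by (simp add: power2_eq_square algebra_simps)
  ultimately show ?thesis
    using H_sign by (simp add: power2_eq_square algebra_simps)
qed

lemma fast_slow_quadratic_estimate:
  fixes u v w H P A0 A2 b0 b2 \<epsilon> b :: real
  assumes "\<bar>A0\<bar> \<le> 20" "\<bar>A2\<bar> \<le> 20" "\<bar>P\<bar> \<le> 1" "H*w \<le> -17*w\<^sup>2" "\<bar>H\<bar> \<le> 41*\<bar>w\<bar>"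
    and b: "b \<le> b0" "b \<le> b2" and \<epsilon>: "0 < \<epsilon>" "79380*\<epsilon> \<le> b"
  shows "2*u*(-b0*u - A0*(\<epsilon>*(H + u + v * P))) + 2 * v * (-b2 * v - A2*(\<epsilon>*(H + u + v * P)))
      + 2*w*(\<epsilon>*(H + u + v * P)) \<le> -(17*\<epsilon>)*(u\<^sup>2 + v\<^sup>2 + w\<^sup>2)"
proof -
  have "2*\<epsilon>*(-((H + u + v * P)*(A0*u + A2 * v)) + H*w + w*(u + v * P))
      \<le> 2*\<epsilon>*(39690*(u\<^sup>2 + v\<^sup>2) - 17/2*w\<^sup>2)"
    using slow_terms_le[OF assms(1-5)] \<epsilon> by (intro mult_left_mono) auto
  moreover have "-2*b0*u\<^sup>2 - 2*b2 * v\<^sup>2 \<le> -2*b*(u\<^sup>2 + v\<^sup>2)"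
    using mult_right_mono[OF b(1), of "u\<^sup>2"] mult_right_mono[OF b(2), of "v\<^sup>2"] by (simp add: algebra_simps)
  moreover have "0 \<le> (2*b - 79397*\<epsilon>)*(u\<^sup>2 + v\<^sup>2)" using \<epsilon> by (intro mult_nonneg_nonneg) auto
  ultimately show ?thesis by (simp add: power2_eq_square algebra_simps)
qed

lemma Vminus_eq: "Vminus R \<epsilon> z =
    (-(Bc/R) * (fst z - fminus0 (snd (snd z))), -((Bc + 6*Dc)/R) * (fst (snd z) - fminus2 (snd (snd z))),
     \<epsilon> * (fst z + fst (snd z) * p2 (snd (snd z)) - Tc))"
  by (cases z) (simp add: Vminus_def Vfield_def)

lemma lipschitz_on_Vminus_box:
  "\<exists>L. L-lipschitz_on (UNIV \<times> {-60..-40} \<times> {23/100..26/100}) (Vminus R \<epsilon>)"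
proof -
  let ?S = "UNIV \<times> {-60..-40::real} \<times> {23/100..26/100::real}"
  have T0: "1-lipschitz_on ?S (\<lambda>z. fst z)" and T2: "1-lipschitz_on ?S (\<lambda>z. fst (snd z))"
    and \<eta>: "1-lipschitz_on ?S (\<lambda>z. snd (snd z))"
    using lipschitz_on_compose_into[OF lipschitz_on_snd _ lipschitz_on_fst, of ?S UNIV]
      lipschitz_on_compose_into[OF lipschitz_on_snd _ lipschitz_on_snd, of ?S UNIV]
    by (auto simp: lipschitz_on_fst)
  have \<eta>_window: "(\<lambda>z. snd (snd z)) ` ?S \<subseteq> {23/100..26/100}" by auto
  note compose = lipschitz_on_compose_into[OF \<eta> \<eta>_window]
  have f0: "20-lipschitz_on ?S (\<lambda>z. fminus0 (snd (snd z)))"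
    and f2: "20-lipschitz_on ?S (\<lambda>z. fminus2 (snd (snd z)))"
    and p: "1-lipschitz_on ?S (\<lambda>z. p2 (snd (snd z)))"
    using compose[OF lipschitz_on_window(1)] compose[OF lipschitz_on_window(2)] compose[OF lipschitz_on_window(3)]
    by simp_all
  have T2p: "(1/2 * 1 + 60 * 1)-lipschitz_on ?S (\<lambda>z. fst (snd z) * p2 (snd (snd z)))"
    using window_bounds(5) by (intro lipschitz_on_mult_bounded[OF T2 p]) auto
  have c1: "(\<bar>-(Bc/R)\<bar> * (1 + 20))-lipschitz_on ?S (\<lambda>z. -(Bc/R) * (fst z - fminus0 (snd (snd z))))"
    by (rule lipschitz_on_cmult_real[OF lipschitz_on_diff[OF T0 f0]])
  have c2: "(\<bar>-((Bc + 6*Dc)/R)\<bar> * (1 + 20))-lipschitz_on ?S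
      (\<lambda>z. -((Bc + 6*Dc)/R) * (fst (snd z) - fminus2 (snd (snd z))))"
    by (rule lipschitz_on_cmult_real[OF lipschitz_on_diff[OF T2 f2]])
  have c3: "(\<bar>\<epsilon>\<bar> * ((1 + (1/2 * 1 + 60 * 1)) + 0))-lipschitz_on ?S
      (\<lambda>z. \<epsilon> * (fst z + fst (snd z) * p2 (snd (snd z)) - Tc))"
    by (rule lipschitz_on_cmult_real[OF lipschitz_on_diff[OF lipschitz_on_add[OF T0 T2p] lipschitz_on_constant]])
  show ?thesis
    unfolding Vminus_eq[abs_def]
    by (rule exI, rule lipschitz_on_Pair, rule c1, rule lipschitz_on_Pair, rule c2, rule c3)
qed

text \<open>Only used to produce global solutions: unlike \<open>V\<close> it is globally Lipschitz, and it agrees with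
  \<open>V\<^sup>-\<close> on the box containing the trapping region of the equilibrium.\<close>

definition Vclamped :: "real \<Rightarrow> real \<Rightarrow> real \<times> real \<times> real \<Rightarrow> real \<times> real \<times> real" where
  "Vclamped R \<epsilon> z = Vminus R \<epsilon> (fst z, clamp (-60, 23/100) (-40, 26/100) (snd z))"

lemma clamp_mem_box: "clamp ((-60, 23/100) :: real \<times> real) (-40, 26/100) y \<in> {-60..-40} \<times> {23/100..26/100}"
proof -
  have box: "cbox ((-60, 23/100) :: real \<times> real) (-40, 26/100) = {-60..-40} \<times> {23/100..26/100}"
    unfolding cbox_Pair_eq by (simp add: cbox_interval)
  then have "\<forall>i\<in>Basis. ((-60, 23/100) :: real \<times> real) \<bullet> i \<le> (-40, 26/100) \<bullet> i"
    using box_ne_empty(1)[of "(-60, 23/100) :: real \<times> real" "(-40, 26/100)"] by auto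
  then show ?thesis using clamp_in_interval box by metis
qed

lemma lipschitz_on_Vclamped: "\<exists>L. L-lipschitz_on UNIV (Vclamped R \<epsilon>)"
proof -
  let ?\<pi> = "\<lambda>z. (fst z, clamp (-60, 23/100) (-40, 26/100) (snd z)) :: real \<times> real \<times> real"
  obtain L where L: "L-lipschitz_on (UNIV \<times> {-60..-40} \<times> {23/100..26/100}) (Vminus R \<epsilon>)"
    using lipschitz_on_Vminus_box by blast
  have clamp: "1-lipschitz_on U (clamp ((-60, 23/100) :: real \<times> real) (-40, 26/100))" for U
    by (rule lipschitz_onI) (auto simp: dist_clamps_le_dist_args)
  have "(sqrt (1\<^sup>2 + (1 * 1)\<^sup>2))-lipschitz_on UNIV ?\<pi>"
    by (intro lipschitz_on_Pair lipschitz_on_fst lipschitz_on_compose2[OF lipschitz_on_snd clamp])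
  moreover have "?\<pi> ` UNIV \<subseteq> UNIV \<times> {-60..-40} \<times> {23/100..26/100}"
    by (intro image_subsetI SigmaI UNIV_I clamp_mem_box)
  ultimately show ?thesis
    unfolding Vclamped_def[abs_def] using lipschitz_on_compose_into[OF _ _ L] by blast
qed

definition lyapunov :: "real \<Rightarrow> real \<times> real \<times> real \<Rightarrow> real" where
  "lyapunov e z = (fst z - fminus0 (snd (snd z)))\<^sup>2 + (fst (snd z) - fminus2 (snd (snd z)))\<^sup>2
     + (snd (snd z) - e)\<^sup>2"

lemma lyapunov_nonneg: "0 \<le> lyapunov e z"
  by (simp add: lyapunov_def)

lemma continuous_on_lyapunov: "continuous_on UNIV (lyapunov e)"
  unfolding lyapunov_def[abs_def] fminus0_eq[abs_def] fminus2_eq[abs_def] by (intro continuous_intros)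

context
  fixes e :: real
  assumes e_window: "e \<in> {24/100..25/100}" and e_root: "slow_drift e = 0"
begin

lemma lyapunov_sublevel_bounds:
  assumes "lyapunov e z < 1/10000"
  shows "\<bar>snd (snd z) - e\<bar> < 1/100" "snd (snd z) \<in> {23/100..26/100}" "fst (snd z) \<in> {-60..-40}"
proof -
  let ?\<eta> = "snd (snd z)"
  have sq: "(?\<eta> - e)\<^sup>2 < 1/10000" "(fst (snd z) - fminus2 ?\<eta>)\<^sup>2 < 1/10000"
    using assms zero_le_power2[of "fst z - fminus0 ?\<eta>"] zero_le_power2[of "fst (snd z) - fminus2 ?\<eta>"]
      zero_le_power2[of "?\<eta> - e"]
    unfolding lyapunov_def by linarith+
  have close: "\<bar>?\<eta> - e\<bar> < 1/100" "\<bar>fst (snd z) - fminus2 ?\<eta>\<bar> < 1/100"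
    using power2_less_imp_less[of "\<bar>?\<eta> - e\<bar>" "1/100"]
      power2_less_imp_less[of "\<bar>fst (snd z) - fminus2 ?\<eta>\<bar>" "1/100"] sq
    by (simp_all add: power_divide)
  then show "\<bar>?\<eta> - e\<bar> < 1/100" by simp
  show window: "?\<eta> \<in> {23/100..26/100}" using close(1)[unfolded abs_less_iff] e_window by auto
  show "fst (snd z) \<in> {-60..-40}" using close(2)[unfolded abs_less_iff] window_bounds(3,4)[OF window] by auto
qed

lemma V_eq_Vminus:
  assumes "lyapunov e z < 1/10000" shows "V R \<epsilon> z = Vminus R \<epsilon> z"
proof -
  have "snd (snd z) < rho" using lyapunov_sublevel_bounds(2)[OF assms] by (simp add: rho_def)
  then show ?thesis by (simp add: V_def)
qed

lemma Vclamped_eq_Vminus: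
  assumes "lyapunov e z < 1/10000" shows "Vclamped R \<epsilon> z = Vminus R \<epsilon> z"
proof -
  have "snd z \<in> cbox (-60, 23/100) (-40, 26/100)"
    using lyapunov_sublevel_bounds(2,3)[OF assms] by (cases z) (simp add: cbox_Pair_eq cbox_interval)
  then show ?thesis by (simp add: Vclamped_def)
qed

lemma Vminus_equilibrium: "Vminus R \<epsilon> (fminus0 e, fminus2 e, e) = 0"
  using e_root by (simp add: Vminus_def Vfield_def slow_drift_def zero_prod_def)

lemma dist_equilibrium_le_lyapunov:
  assumes "lyapunov e z < 1/10000"
  shows "(dist z (fminus0 e, fminus2 e, e))\<^sup>2 \<le> 1601 * lyapunov e z"
proof -
  let ?\<eta> = "snd (snd z)"
  have sq: "(a + b)\<^sup>2 \<le> 2*a\<^sup>2 + 2*b\<^sup>2" for a b :: real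
    using zero_le_power2[of "a - b"] by (simp add: power2_eq_square algebra_simps)
  have "\<bar>f ?\<eta> - f e\<bar> \<le> 20 * \<bar>?\<eta> - e\<bar>" if "20-lipschitz_on {23/100..26/100} f" for f
    using lipschitz_onD[OF that lyapunov_sublevel_bounds(2)[OF assms]] e_window by (simp add: dist_real_def)
  then have "(f ?\<eta> - f e)\<^sup>2 \<le> 400 * (?\<eta> - e)\<^sup>2" if "20-lipschitz_on {23/100..26/100} f" for f
    using power_mono[of "\<bar>f ?\<eta> - f e\<bar>" "20 * \<bar>?\<eta> - e\<bar>" 2] that by (simp add: power_mult_distrib)
  note shift = this[OF lipschitz_on_window(1)] this[OF lipschitz_on_window(2)]
  have "(fst z - fminus0 e)\<^sup>2 \<le> 2*(fst z - fminus0 ?\<eta>)\<^sup>2 + 800*(?\<eta> - e)\<^sup>2"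
    using sq[of "fst z - fminus0 ?\<eta>" "fminus0 ?\<eta> - fminus0 e"] shift(1) by simp
  moreover have "(fst (snd z) - fminus2 e)\<^sup>2 \<le> 2*(fst (snd z) - fminus2 ?\<eta>)\<^sup>2 + 800*(?\<eta> - e)\<^sup>2"
    using sq[of "fst (snd z) - fminus2 ?\<eta>" "fminus2 ?\<eta> - fminus2 e"] shift(2) by simp
  ultimately show ?thesis
    unfolding dist_triple_power2 lyapunov_def fst_conv snd_conv distrib_left
    using zero_le_power2[of "fst z - fminus0 ?\<eta>"] zero_le_power2[of "fst (snd z) - fminus2 ?\<eta>"] by linarith
qed

context
  fixes R \<epsilon> :: real
  assumes R: "0 < R" and \<epsilon>: "0 < \<epsilon>" "79380 * \<epsilon> \<le> Bc / R"
begin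

lemma lyapunov_decay_rate:
  assumes F: "\<And>z. lyapunov e z < 1/10000 \<Longrightarrow> F z = Vminus R \<epsilon> z"
    and small: "lyapunov e (x t) < 1/10000" and x': "(x has_vector_derivative F (x t)) (at t)"
  shows "\<exists>D. ((\<lambda>t. lyapunov e (x t)) has_real_derivative D) (at t) \<and> D \<le> -(17*\<epsilon>) * lyapunov e (x t)"
proof -
  obtain T0 T2 \<eta> where xt: "x t = (T0, T2, \<eta>)" by (metis prod_cases3)
  have x'V: "(x has_vector_derivative Vminus R \<epsilon> (T0, T2, \<eta>)) (at t)"
    using x' F[OF small] xt by simp
  define \<eta>' where "\<eta>' = \<epsilon> * (T0 + T2 * p2 \<eta> - Tc)"
  have components:
      "((\<lambda>t. fst (x t)) has_real_derivative -(Bc/R) * (T0 - fminus0 \<eta>)) (at t)"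
      "((\<lambda>t. fst (snd (x t))) has_real_derivative -((Bc + 6*Dc)/R) * (T2 - fminus2 \<eta>)) (at t)"
      "((\<lambda>t. snd (snd (x t))) has_real_derivative \<eta>') (at t)"
    using has_vector_derivative_fst[OF x'V] has_vector_derivative_fst[OF has_vector_derivative_snd[OF x'V]]
      has_vector_derivative_snd[OF has_vector_derivative_snd[OF x'V]]
    by (simp_all add: has_real_derivative_iff_has_vector_derivative Vminus_eq \<eta>'_def)
  define D where "D = 2*(T0 - fminus0 \<eta>)*(-(Bc/R)*(T0 - fminus0 \<eta>) - fminus0' \<eta> * \<eta>')
    + 2*(T2 - fminus2 \<eta>)*(-((Bc + 6*Dc)/R)*(T2 - fminus2 \<eta>) - fminus2' \<eta> * \<eta>') + 2*(\<eta> - e)*\<eta>'"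
  have "((\<lambda>t. lyapunov e (x t)) has_real_derivative D) (at t)"
    unfolding lyapunov_def[abs_def] D_def using components xt
    by (auto intro!: derivative_eq_intros DERIV_chain2[OF has_real_derivative_fminus0]
        DERIV_chain2[OF has_real_derivative_fminus2] simp: algebra_simps diff_divide_distrib add_divide_distrib)
  moreover have "D \<le> -(17*\<epsilon>) * lyapunov e (x t)"
  proof -
    have \<eta>: "\<bar>\<eta> - e\<bar> \<le> 1/100" "\<eta> \<in> {23/100..26/100}"
      using lyapunov_sublevel_bounds(1,2)[OF small] xt by auto
    have \<eta>'_eq: "\<eta>' = \<epsilon> * (slow_drift \<eta> + (T0 - fminus0 \<eta>) + (T2 - fminus2 \<eta>) * p2 \<eta>)"
      by (simp add: \<eta>'_def slow_drift_def algebra_simps)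
    have "Bc/R \<le> (Bc + 6*Dc)/R" using R by (simp add: divide_right_mono Dc_def)
    then show ?thesis
      unfolding D_def \<eta>'_eq lyapunov_def xt fst_conv snd_conv
      using window_bounds(1,2,5)[OF \<eta>(2)] slow_drift_slope[OF e_window e_root \<eta>(1)] \<epsilon>
      by (intro fast_slow_quadratic_estimate[where b="Bc/R"]) auto
  qed
  ultimately show ?thesis by blast
qed

lemma V_solution_exists:
  assumes "lyapunov e x0 < 1/10000"
  shows "\<exists>x. is_solution_on (V R \<epsilon>) x {0..} \<and> x 0 = x0"
proof -
  obtain L where "L-lipschitz_on UNIV (Vclamped R \<epsilon>)" using lipschitz_on_Vclamped by blast
  then obtain x where x: "is_solution_on (Vclamped R \<epsilon>) x {0..}" "x 0 = x0"
    using lipschitz_ode_solution_exists by blast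
  have "lyapunov e (x t) < 1/10000" if "0 \<le> t" for t
  proof (rule lyapunov_sublevel_decay(1)[where F="Vclamped R \<epsilon>" and T=t])
    show "is_solution_on (Vclamped R \<epsilon>) x {0..t}" using x(1) by (rule is_solution_on_subset) auto
    show "\<exists>D. ((\<lambda>t. lyapunov e (y t)) has_real_derivative D) (at t) \<and> D \<le> -(17*\<epsilon>) * lyapunov e (y t)"
      if "lyapunov e (y t) < 1/10000" "(y has_vector_derivative Vclamped R \<epsilon> (y t)) (at t)" for y t
      by (rule lyapunov_decay_rate[OF Vclamped_eq_Vminus that])
  qed (use assms x(2) that \<epsilon> in \<open>auto intro: continuous_on_lyapunov lyapunov_nonneg\<close>)
  then have "is_solution_on (V R \<epsilon>) x {0..}"
    using x(1) unfolding is_solution_on_def by (simp add: V_eq_Vminus Vclamped_eq_Vminus)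
  then show ?thesis using x(2) by blast
qed

lemma jormungand_equilibrium_asymptotically_stable:
  "asymptotically_stable_equilibrium (V R \<epsilon>) (fminus0 e, fminus2 e, e)"
proof (rule asymptotically_stable_equilibriumI_lyapunov
    [where W="lyapunov e" and c="1/10000" and k="17*\<epsilon>" and M=1601])
  show "lyapunov e (fminus0 e, fminus2 e, e) = 0" by (simp add: lyapunov_def)
  show "V R \<epsilon> (fminus0 e, fminus2 e, e) = 0"
    using V_eq_Vminus Vminus_equilibrium by (simp add: lyapunov_def)
  show "\<exists>D. ((\<lambda>t. lyapunov e (x t)) has_real_derivative D) (at t) \<and> D \<le> -(17*\<epsilon>) * lyapunov e (x t)"
    if "lyapunov e (x t) < 1/10000" "(x has_vector_derivative V R \<epsilon> (x t)) (at t)" for x t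
    by (rule lyapunov_decay_rate[OF V_eq_Vminus that])
qed (use \<epsilon> continuous_on_lyapunov lyapunov_nonneg dist_equilibrium_le_lyapunov V_solution_exists
    in auto)

end

end

theorem proposition4:
  fixes R :: real
  assumes "R > 0"
  shows "\<exists>\<epsilon>0>0. \<forall>\<epsilon>. 0 < \<epsilon> \<and> \<epsilon> < \<epsilon>0 \<longrightarrow>
           (\<exists>p :: real \<times> real \<times> real.
              0 < snd (snd p) \<and> snd (snd p) < rho \<and>
              asymptotically_stable_equilibrium (V R \<epsilon>) p)"
proof -
  obtain e where e: "e \<in> {24/100..25/100}" "slow_drift e = 0" using slow_drift_has_root by blast
  have "asymptotically_stable_equilibrium (V R \<epsilon>) (fminus0 e, fminus2 e, e)"
    if "0 < \<epsilon>" "\<epsilon> < Bc / R / 79380" for \<epsilon>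
    using jormungand_equilibrium_asymptotically_stable[OF e assms that(1)] that(2) by simp
  moreover have "0 < e" "e < rho" using e(1) by (auto simp: rho_def)
  moreover have "0 < Bc / R / 79380" using assms by (simp add: Bc_def)
  ultimately show ?thesis by (intro exI[of _ "Bc / R / 79380"]) auto
qed

end
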